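(* The max-min fairness mechanism (MMF) is efficient, fair, and strategy-proof. That is, for every $n\ge 1$, every vector of entitlements $e_1,\dots,e_n>0$ with $\sum_i e_i=1$, and for agents whose utilities are as described in the context: (i) (efficiency) for every vector of true demands $d^*\in\mathbb{R}_+^n$, if every agent reports her true demand and $a$ is the MMF output, then $\ell(d^*,a)=0$; (ii) (fairness) for every agent $i$ who reports her true demand $d_i^*$ and for any demands reported by the other agents, the MMF output $a$ satisfies $u_i(a_i)\ge u_i(e_i)$; (iii) (strategy-proofness) for every agent $i$ and every fixed vector of demands reported by the other agents, if $a^\star$ is the MMF output when $i$ reports $d_i^*$ and $a$ is the MMF output when $i$ reports any other $d_i\ge 0$, then $u_i(a^\star_i)\ge u_i(a_i)$.
   Context: A divisible resource of total size $1$ is shared by $n$ agents; agent $i$ has entitlement $e_i>0$ with $\sum_i e_i=1$. Agent $i$ has a true demand $d_i^*\ge 0$ and a utility $u_i:\mathbb{R}_+\to\mathbb{R}_+$ that is strictly increasing on $[0,d_i^*]$ and satisfies $u_i(x)=u_i(d_i^* )$ for all $x\ge d_i^*$. MMF: given entitlements $e$ and reported demands $d_1,\dots,d_n\ge 0$, set $r=1$, $E=1$, $S=\{1,\dots,n\}$, $a=0\in\mathbb{R}^n$. Process the agents $j$ in ascending order of $d_j/e_j$. For the current $j$: if $d_j<r e_j/E$, set $a_j=d_j$, remove $j$ from $S$, update $r\leftarrow r-d_j$, $E\leftarrow E-e_j$, and continue with the next agent; otherwise set $a_k=r e_k/E$ for all $k\in S$ and stop. Output $a$. For $d,a\in\mathbb{R}_+^n$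 let $\ell_{ur}(a)=1-\sum_i a_i$, $\ell_{or}(d,a)=\sum_i (a_i-d_i)^+$, $\ell_{ud}(d,a)=\sum_i(d_i-a_i)^+$ (with $y^+=\max(y,0)$), and $\ell(d,a)=\min\big(\ell_{ur}(a)+\ell_{or}(d,a),\,\ell_{ud}(d,a)\big)$. *)

theory Defs
  imports Main Complex_Main
begin

text \<open>Agents are indexed by 0,...,n-1; vectors are functions nat => real,
  of which only the values below n matter.\<close>

text \<open>The list holds the agents not yet processed
  (the set S), in ascending order of d_j/e_j; r and E are the remaining
  resource and remaining entitlement; a is the current allocation.\<close>
fun mmf_loop :: "(nat \<Rightarrow> real) \<Rightarrow> (nat \<Rightarrow> real) \<Rightarrow> real \<Rightarrow> real \<Rightarrow> nat list
                   \<Rightarrow> (nat \<Rightarrow> real) \<Rightarrow> (nat \<Rightarrow> real)" where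
  "mmf_loop e d r E [] a = a"
| "mmf_loop e d r E (j # js) a =
     (if d j < r * e j / E
      then mmf_loop e d (r - d j) (E - e j) js (a(j := d j))
      else (\<lambda>k. if k \<in> set (j # js) then r * e k / E else a k))"

text \<open>The MMF mechanism: agents processed in ascending order of d_j/e_j
  (ties broken by index; the output does not depend on the tie-break).\<close>
definition mmf :: "nat \<Rightarrow> (nat \<Rightarrow> real) \<Rightarrow> (nat \<Rightarrow> real) \<Rightarrow> (nat \<Rightarrow> real)" where
  "mmf n e d = mmf_loop e d 1 1 (sort_key (\<lambda>j. d j / e j) [0..<n]) (\<lambda>_. 0)"

definition loss_ur :: "nat \<Rightarrow> (nat \<Rightarrow> real) \<Rightarrow> real" where
  "loss_ur n a = 1 - (\<Sum>i<n. a i)"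

definition loss_or :: "nat \<Rightarrow> (nat \<Rightarrow> real) \<Rightarrow> (nat \<Rightarrow> real) \<Rightarrow> real" where
  "loss_or n d a = (\<Sum>i<n. max (a i - d i) 0)"

definition loss_ud :: "nat \<Rightarrow> (nat \<Rightarrow> real) \<Rightarrow> (nat \<Rightarrow> real) \<Rightarrow> real" where
  "loss_ud n d a = (\<Sum>i<n. max (d i - a i) 0)"

definition loss :: "nat \<Rightarrow> (nat \<Rightarrow> real) \<Rightarrow> (nat \<Rightarrow> real) \<Rightarrow> real" where
  "loss n d a = min (loss_ur n a + loss_or n d a) (loss_ud n d a)"

end

theory Submission
  imports Defs
begin

text \<open>MMF is water-filling: either all demands fit into the resource and are granted,
  or there is a level \<open>l \<ge> 1\<close> such that agent \<open>k\<close> receives \<open>min d\<^sub>k (l e\<^sub>k)\<close> and the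
  whole resource is handed out. Efficiency is then immediate, and fairness follows
  from \<open>l \<ge> 1\<close>. An agent who is rationed receives \<open>l e\<^sub>i\<close>, and level \<open>l\<close> exhausts the
  resource whatever she reports. After a misreport the new level \<open>l'\<close> is either at most
  \<open>l\<close>, or it serves every other agent at least as well as \<open>l\<close> does; in both cases
  her share stays at most \<open>l e\<^sub>i\<close>. Since utilities are flat beyond the true demand,
  only \<open>min a\<^sub>i d\<^sub>i\<^sup>*\<close> matters for her.\<close>

text \<open>\<open>r\<close> and \<open>E\<close> are the resource and the entitlement not yet handed out; every agent
  served so far got her demand, which is below the current level \<open>r / E\<close> (stated
  multiplicatively, as \<open>E = 0\<close> once everybody is served).\<close>

definition mmf_loop_inv ::
    "nat \<Rightarrow> (nat \<Rightarrow> real) \<Rightarrow> (nat \<Rightarrow> real) \<Rightarrow> real \<Rightarrow> real \<Rightarrow> nat list \<Rightarrow> (nat \<Rightarrow> real) \<Rightarrow> bool"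
  where "mmf_loop_inv n e d r E js a \<longleftrightarrow>
    E = (\<Sum>k\<in>set js. e k) \<and> 0 < r \<and> E \<le> r \<and>
    (\<Sum>k\<in>{..<n} - set js. a k) + r = 1 \<and>
    (\<forall>k\<in>{..<n} - set js. a k = d k \<and> d k * E \<le> r * e k)"

definition water_filling :: "nat \<Rightarrow> (nat \<Rightarrow> real) \<Rightarrow> (nat \<Rightarrow> real) \<Rightarrow> (nat \<Rightarrow> real) \<Rightarrow> bool"
  where "water_filling n e d a \<longleftrightarrow>
    (\<forall>k<n. a k = d k) \<and> (\<Sum>k<n. d k) < 1 \<or>
    (\<exists>l\<ge>1. (\<forall>k<n. a k = min (d k) (l * e k)) \<and> (\<Sum>k<n. a k) = 1)"

lemma le_level_after_serving:
  fixes r E dj ej dk ek :: real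
  assumes "dj * E \<le> r * ej" "dk * E \<le> r * ek" "0 < E" "ej \<le> E" "0 \<le> ek"
  shows "dk * (E - ej) \<le> (r - dj) * ek"
proof -
  have "(dk * (E - ej)) * E = (dk * E) * (E - ej)" by (simp add: algebra_simps)
  also have "\<dots> \<le> (r * ek) * (E - ej)"
    using assms(2,4) by (intro mult_right_mono) auto
  also have "\<dots> = ek * (r * (E - ej))" by (simp add: algebra_simps)
  also have "\<dots> \<le> ek * ((r - dj) * E)"
    using assms(1,5) by (intro mult_left_mono) (auto simp: algebra_simps)
  also have "\<dots> = ((r - dj) * ek) * E" by (simp add: algebra_simps)
  finally show ?thesis using \<open>0 < E\<close> by simp
qed

lemma mmf_loop_inv_step:
  assumes inv: "mmf_loop_inv n e d r E (j # js) a"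
    and j: "j < n" "j \<notin> set js" and js: "set js \<subseteq> {..<n}" and e_pos: "\<forall>k<n. 0 < e k"
    and below: "d j < r * e j / E"
  shows "mmf_loop_inv n e d (r - d j) (E - e j) js (a(j := d j))"
proof -
  have E_sum: "E = (\<Sum>k\<in>set (j # js). e k)" and "E \<le> r"
    and served: "(\<Sum>k\<in>{..<n} - set (j # js). a k) + r = 1"
    and served_below: "\<forall>k\<in>{..<n} - set (j # js). a k = d k \<and> d k * E \<le> r * e k"
    using inv unfolding mmf_loop_inv_def by blast+
  have E_rest: "E - e j = (\<Sum>k\<in>set js. e k)" using E_sum j by simp
  have "0 \<le> (\<Sum>k\<in>set js. e k)" using js e_pos by (intro sum_nonneg) (auto simp: subset_iff less_imp_le)
  then have "0 \<le> E - e j" "0 < E" using E_rest e_pos j by auto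
  then have dj: "d j * E < r * e j" using below by (simp add: pos_less_divide_eq)
  then have gain: "r * (E - e j) < (r - d j) * E" by (simp add: algebra_simps)
  have "E * (E - e j) \<le> r * (E - e j)"
    using \<open>E \<le> r\<close> \<open>0 \<le> E - e j\<close> by (rule mult_right_mono)
  then have "E * (E - e j) < E * (r - d j)" using gain by (simp add: mult.commute)
  then have "E - e j < r - d j" using \<open>0 < E\<close> by simp
  have served_below_after: "d k * (E - e j) \<le> (r - d j) * e k" if "k \<in> {..<n} - set js" for k
  proof (rule le_level_after_serving)
    show "d k * E \<le> r * e k" using served_below dj that by (cases "k = j") auto
  qed (use dj e_pos that \<open>0 < E\<close> \<open>0 \<le> E - e j\<close> in auto)
  have split: "{..<n} - set js = insert j ({..<n} - set (j # js))" using j by auto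
  have "(\<Sum>k\<in>{..<n} - set js. (a(j := d j)) k) = d j + (\<Sum>k\<in>{..<n} - set (j # js). a k)"
    unfolding split by (simp add: sum.insert)
  then show ?thesis
    using E_rest \<open>E - e j < r - d j\<close> \<open>0 \<le> E - e j\<close> served served_below served_below_after
    unfolding mmf_loop_inv_def split by auto
qed

lemma mmf_loop_stop_water_filling:
  assumes inv: "mmf_loop_inv n e d r E (j # js) a"
    and js: "set (j # js) \<subseteq> {..<n}" and sorted: "sorted_wrt (\<lambda>x y. d x / e x \<le> d y / e y) (j # js)"
    and e_pos: "\<forall>k<n. 0 < e k" and not_below: "\<not> d j < r * e j / E"
  shows "water_filling n e d (mmf_loop e d r E (j # js) a)"
proof -
  have E: "E = (\<Sum>k\<in>set (j # js). e k)" and "E \<le> r"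
    and served: "(\<Sum>k\<in>{..<n} - set (j # js). a k) + r = 1"
    and served_below: "\<forall>k\<in>{..<n} - set (j # js). a k = d k \<and> d k * E \<le> r * e k"
    using inv unfolding mmf_loop_inv_def by blast+
  define l where "l = r / E"
  define a' where "a' = mmf_loop e d r E (j # js) a"
  have out: "a' k = (if k \<in> set (j # js) then l * e k else a k)" for k
    unfolding a'_def l_def using not_below by auto
  have "e j \<le> E"
    unfolding E using js e_pos by (intro member_le_sum) (auto simp: subset_iff less_imp_le)
  moreover have "0 < e j" using e_pos js by simp
  ultimately have "0 < E" by linarith
  have "1 \<le> l" using \<open>E \<le> r\<close> \<open>0 < E\<close> by (simp add: l_def)
  have "l * e k \<le> d k" if "k \<in> set (j # js)" for k
  proof -
    have "l * e j \<le> d j" using not_below by (simp add: l_def)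
    then have "l \<le> d j / e j" using e_pos js by (simp add: field_simps)
    also have "\<dots> \<le> d k / e k" using sorted that by auto
    finally show ?thesis using e_pos js that by (auto simp: field_simps)
  qed
  moreover have "d k \<le> l * e k" if "k \<in> {..<n} - set (j # js)" for k
    using served_below that \<open>0 < E\<close> by (auto simp: l_def field_simps)
  ultimately have "\<forall>k<n. a' k = min (d k) (l * e k)"
    using served_below by (auto simp: out)
  moreover have "(\<Sum>k<n. a' k) = 1"
  proof -
    have "(\<Sum>k\<in>{..<n} - set (j # js). a' k) = 1 - r"
      using served by (simp add: out)
    moreover have "(\<Sum>k\<in>set (j # js). a' k) = r"
      using E \<open>0 < E\<close> by (simp add: out l_def flip: sum_divide_distrib sum_distrib_left)
    ultimately show ?thesis using sum.subset_diff[OF js, of a'] by simp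
  qed
  ultimately show ?thesis using \<open>1 \<le> l\<close> unfolding water_filling_def a'_def by blast
qed

lemma mmf_loop_water_filling:
  assumes "distinct js" "set js \<subseteq> {..<n}" "sorted_wrt (\<lambda>x y. d x / e x \<le> d y / e y) js"
    "\<forall>k<n. 0 < e k" "mmf_loop_inv n e d r E js a"
  shows "water_filling n e d (mmf_loop e d r E js a)"
  using assms
proof (induction js arbitrary: r E a)
  case Nil
  then have "\<forall>k<n. a k = d k" "(\<Sum>k<n. a k) < 1" by (auto simp: mmf_loop_inv_def)
  then show ?case by (simp add: water_filling_def)
next
  case (Cons j js)
  show ?case
  proof (cases "d j < r * e j / E")
    case True
    then show ?thesis
      using Cons.prems mmf_loop_inv_step[OF Cons.prems(5)] Cons.IH by simp
  next
    case False
    then show ?thesis using Cons.prems mmf_loop_stop_water_filling by blast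
  qed
qed

lemma mmf_water_filling:
  assumes e_pos: "\<forall>k<n. 0 < e k" and e_sum: "(\<Sum>k<n. e k) = 1"
  shows "water_filling n e d (mmf n e d)"
proof -
  let ?js = "sort_key (\<lambda>j. d j / e j) [0..<n]"
  have "sorted_wrt (\<lambda>x y. d x / e x \<le> d y / e y) ?js"
    using sorted_sort_key[of "\<lambda>j. d j / e j" "[0..<n]"] by (simp add: sorted_map)
  moreover have "mmf_loop_inv n e d 1 1 ?js (\<lambda>_. 0)"
    using e_sum by (simp add: mmf_loop_inv_def atLeast0LessThan)
  ultimately show ?thesis
    unfolding mmf_def using e_pos by (intro mmf_loop_water_filling) auto
qed

lemma mmf_cases [consumes 2, case_names satisfied level]:
  assumes "\<forall>k<n. 0 < e k" "(\<Sum>k<n. e k) = 1"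
  obtains (satisfied) "\<forall>k<n. mmf n e d k = d k" "(\<Sum>k<n. d k) < 1"
    | (level) l where "1 \<le> l" "\<forall>k<n. mmf n e d k = min (d k) (l * e k)" "(\<Sum>k<n. mmf n e d k) = 1"
  using mmf_water_filling[OF assms] unfolding water_filling_def by blast

lemma loss_mmf:
  assumes "\<forall>k<n. 0 < e k" "(\<Sum>k<n. e k) = 1"
  shows "loss n d (mmf n e d) = 0"
  using assms
proof (cases rule: mmf_cases[where d = d])
  case satisfied
  then show ?thesis by (simp add: loss_def loss_ur_def loss_or_def loss_ud_def)
next
  case (level l)
  have "0 \<le> loss_ud n d (mmf n e d)" unfolding loss_ud_def by (intro sum_nonneg) simp
  then show ?thesis using level by (simp add: loss_def loss_ur_def loss_or_def)
qed

lemma mmf_ge_min_entitlement: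
  assumes "\<forall>k<n. 0 < e k" "(\<Sum>k<n. e k) = 1" "i < n"
  shows "min (d i) (e i) \<le> mmf n e d i"
  using assms(1,2)
proof (cases rule: mmf_cases[where d = d])
  case satisfied
  then show ?thesis using \<open>i < n\<close> by simp
next
  case (level l)
  then have "e i \<le> l * e i" using assms by simp
  then show ?thesis using level \<open>i < n\<close> by auto
qed

lemma mmf_nonneg:
  assumes "\<forall>k<n. 0 < e k" "(\<Sum>k<n. e k) = 1" "\<forall>k<n. 0 \<le> d k" "i < n"
  shows "0 \<le> mmf n e d i"
proof -
  have "0 \<le> min (d i) (e i)" using assms(1,3,4) by (simp add: less_imp_le)
  also have "\<dots> \<le> mmf n e d i" using assms(1,2,4) by (rule mmf_ge_min_entitlement)
  finally show ?thesis .
qed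

lemma mmf_share_le_level:
  assumes e: "\<forall>k<n. 0 < e k" "(\<Sum>k<n. e k) = 1" and i: "i < n"
    and exhausted: "1 \<le> l * e i + (\<Sum>k\<in>{..<n} - {i}. min (d k) (l * e k))"
  shows "mmf n e d i \<le> l * e i"
proof -
  have split: "(\<Sum>k<n. f k) = f i + (\<Sum>k\<in>{..<n} - {i}. f k)" for f :: "nat \<Rightarrow> real"
    using i by (simp add: sum.remove)
  show ?thesis
    using e
  proof (cases rule: mmf_cases[where d = d])
    case satisfied
    have "(\<Sum>k\<in>{..<n} - {i}. min (d k) (l * e k)) \<le> (\<Sum>k\<in>{..<n} - {i}. d k)"
      by (intro sum_mono) simp
    then show ?thesis using satisfied exhausted split[of d] i by fastforce
  next
    case (level l')
    show ?thesis
    proof (cases "l' \<le> l")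
      case True
      have "mmf n e d i \<le> l' * e i" using level(2) i by simp
      also have "\<dots> \<le> l * e i" using True e(1) i by (intro mult_right_mono) auto
      finally show ?thesis .
    next
      case False
      have "(\<Sum>k\<in>{..<n} - {i}. min (d k) (l * e k)) \<le> (\<Sum>k\<in>{..<n} - {i}. mmf n e d k)"
      proof (rule sum_mono)
        fix k
        assume k: "k \<in> {..<n} - {i}"
        then have "l * e k \<le> l' * e k" using False e(1) by (intro mult_right_mono) auto
        then show "min (d k) (l * e k) \<le> mmf n e d k" using level(2) k by auto
      qed
      then show ?thesis using level(3) exhausted split[of "mmf n e d"] by linarith
    qed
  qed
qed

lemma mmf_misreport_no_gain:
  assumes e: "\<forall>k<n. 0 < e k" "(\<Sum>k<n. e k) = 1" and i: "i < n"
  shows "min D (mmf n e (d(i := x)) i) \<le> mmf n e (d(i := D)) i"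
  using e
proof (cases rule: mmf_cases[where d = "d(i := D)"])
  case satisfied
  then show ?thesis using i by simp
next
  case (level l)
  show ?thesis
  proof (cases "D \<le> mmf n e (d(i := D)) i")
    case False
    moreover have "mmf n e (d(i := D)) i = min D (l * e i)" using level(2) i by simp
    ultimately have share: "mmf n e (d(i := D)) i = l * e i" by linarith
    have "(\<Sum>k\<in>{..<n} - {i}. mmf n e (d(i := D)) k) = (\<Sum>k\<in>{..<n} - {i}. min (d k) (l * e k))"
      using level(2) by (intro sum.cong) auto
    then have "1 \<le> l * e i + (\<Sum>k\<in>{..<n} - {i}. min (d k) (l * e k))"
      using level(3) share i by (simp add: sum.remove)
    then have "mmf n e (d(i := x)) i \<le> l * e i"
      using mmf_share_le_level[OF e i, of l "d(i := x)"] by simp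
    then show ?thesis using share by simp
  qed simp
qed

lemma saturating_utility_le:
  fixes f :: "real \<Rightarrow> real"
  assumes incr: "strict_mono_on {0..D} f" and sat: "\<forall>x\<ge>D. f x = f D"
    and "0 \<le> y" "min y D \<le> x"
  shows "f y \<le> f x"
proof (cases "D \<le> y")
  case True
  then have "D \<le> x" using \<open>min y D \<le> x\<close> by simp
  then have "f x = f D" "f y = f D" using sat True by blast+
  then show ?thesis by simp
next
  case False
  show ?thesis
  proof (cases "x \<le> D")
    case True
    then show ?thesis
      using False \<open>0 \<le> y\<close> \<open>min y D \<le> x\<close> by (intro strict_mono_on_leD[OF incr]) auto
  next
    case False
    then have "D \<le> x" by simp
    then have "f x = f D" using sat by blast
    moreover have "f y \<le> f D"
      using \<open>\<not> D \<le> y\<close> \<open>0 \<le> y\<close> by (intro strict_mono_on_leD[OF incr]) auto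
    ultimately show ?thesis by simp
  qed
qed

theorem theorem1:
  fixes n :: nat
    and e dstar :: "nat \<Rightarrow> real"
    and u :: "nat \<Rightarrow> real \<Rightarrow> real"
  assumes "n \<ge> 1"
    and e_pos: "\<forall>i<n. e i > 0"
    and e_sum: "(\<Sum>i<n. e i) = 1"
    and dstar_nonneg: "\<forall>i<n. dstar i \<ge> 0"
    and u_nonneg: "\<forall>i<n. \<forall>x\<ge>0. u i x \<ge> 0"
    and u_incr: "\<forall>i<n. strict_mono_on {0..dstar i} (u i)"
    and u_sat: "\<forall>i<n. \<forall>x\<ge>dstar i. u i x = u i (dstar i)"
  shows "loss n dstar (mmf n e dstar) = 0
       \<and> (\<forall>i<n. \<forall>d. (\<forall>j<n. d j \<ge> 0) \<longrightarrow> d i = dstar i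
              \<longrightarrow> u i (mmf n e d i) \<ge> u i (e i))
       \<and> (\<forall>i<n. \<forall>d di. (\<forall>j<n. d j \<ge> 0) \<longrightarrow> di \<ge> 0
              \<longrightarrow> u i (mmf n e (d(i := dstar i)) i) \<ge> u i (mmf n e (d(i := di)) i))"
proof -
  have utility_le: "u i y \<le> u i x" if "i < n" "0 \<le> y" "min y (dstar i) \<le> x" for i x y
    using saturating_utility_le[of "dstar i" "u i" y x] u_incr u_sat that by blast
  show ?thesis
  proof (intro conjI allI impI)
    show "loss n dstar (mmf n e dstar) = 0"
      using e_pos e_sum by (rule loss_mmf)
  next
    fix i :: nat and d :: "nat \<Rightarrow> real"
    assume i: "i < n" and truthful: "d i = dstar i"
    have "min (e i) (dstar i) \<le> mmf n e d i"
      using mmf_ge_min_entitlement[OF e_pos e_sum i, of d] truthful by (simp add: min.commute)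
    then show "u i (e i) \<le> u i (mmf n e d i)"
      using utility_le e_pos i by (simp add: less_imp_le)
  next
    fix i :: nat and d :: "nat \<Rightarrow> real" and di :: real
    assume i: "i < n" and d: "\<forall>j<n. 0 \<le> d j" and "0 \<le> di"
    have "0 \<le> mmf n e (d(i := di)) i"
      using mmf_nonneg[OF e_pos e_sum _ i] d \<open>0 \<le> di\<close> by simp
    moreover have "min (mmf n e (d(i := di)) i) (dstar i) \<le> mmf n e (d(i := dstar i)) i"
      using mmf_misreport_no_gain[OF e_pos e_sum i] by (simp add: min.commute)
    ultimately show "u i (mmf n e (d(i := di)) i) \<le> u i (mmf n e (d(i := dstar i)) i)"
      using utility_le i by blast
  qed
qed

end
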